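(* Let $n\ge3$ and let $L^B$ be a blow-up of $L\cong\mathbf{2}^n$ with atoms $q_1,\dots,q_n$. Then $G(L^B)^{**}$ is the disjoint union $$G(L^B)^{**}=H+K_{|[q_1]|}+K_{|[q_2]|}+\cdots+K_{|[q_n]|},$$ where, for each $i$, $K_{|[q_i]|}$ is the complete graph on the vertex set $[q_i]$, and $H$ is the subgraph induced on $V(G(L^B))\setminus\bigcup_{i}[q_i]$, which is connected.
   Context: Blow-up: for $L\cong\mathbf{2}^n$ with atoms $q_1,\dots,q_n$, replace each $a\in L\setminus\{0,1\}$ by a finite chain $C_a$: $a=a^1\lessdot\cdots\lessdot a^{k_a}$ ($k_a\ge1$), keep $0,1$; elements of one chain are ordered along it, and for $u\in C_a,v\in C_b$ with $a\ne b$ ($C_0=\{0\},C_1=\{1\}$), $u\le v$ iff $a<b$ in $L$. $G(L^B)$ is the zero-divisor graph of $L^B$ (vertices: nonzero elements with a nonzero element meeting them in $0$; adjacency: meet $=0$). For $x\in L^B$, $x^\perp=\{z:x\wedge z=0\}$, $[x]=\{y: y^\perp=x^\perp\}$ (so $[q_i]$ is the chain $C_{q_i}$), and classes are ordered by $[a]\le[b]$ iff $b^\perp\subseteq a^\perp$, with $[a]\wedge[b]=[a\wedge b]$. The graph $G(L^B)^{**}$ has vertex set $V(G(L^B))$, distinct $x,y$ adjacent iff either $[x]=[y]$, or $[x]\wedge[y]\ne[0]$ and $[x],[y]$ are incomparable. "$+$" denotes disjoint union of graphs. *)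

theory Defs
  imports Main
begin

text \<open>The Boolean lattice L = 2^n is modelled as the powerset of {..<n}; atom q_i is {i}.
  The blow-up L^B has elements (a, j) with a a subset of {..<n}: for a proper nonempty a,
  j ranges over 1..k a (the chain C_a : a^1 < ... < a^(k a)); for a = {} (bottom) and
  a = {..<n} (top) only j = 1 occurs.\<close>

type_synonym bel = "nat set \<times> nat"

definition blowup_carrier :: "nat \<Rightarrow> (nat set \<Rightarrow> nat) \<Rightarrow> bel set" where
  "blowup_carrier n k = {(a, j). a \<subseteq> {..<n} \<and>
     (if a = {} \<or> a = {..<n} then j = 1 else 1 \<le> j \<and> j \<le> k a)}"

definition blowup_le :: "bel \<Rightarrow> bel \<Rightarrow> bool" where
  "blowup_le x y \<longleftrightarrow> (fst x = fst y \<and> snd x \<le> snd y) \<or> fst x \<subset> fst y"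

definition blowup_zero :: bel where
  "blowup_zero = ({}, 1)"

definition blowup_atom :: "nat \<Rightarrow> bel" where
  "blowup_atom i = ({i}, 1)"

definition pmeet :: "('a \<Rightarrow> 'a \<Rightarrow> bool) \<Rightarrow> 'a set \<Rightarrow> 'a \<Rightarrow> 'a \<Rightarrow> 'a" where
  "pmeet le S x y = (THE m. m \<in> S \<and> le m x \<and> le m y \<and> (\<forall>z\<in>S. le z x \<and> le z y \<longrightarrow> le z m))"

definition bmeet :: "nat \<Rightarrow> (nat set \<Rightarrow> nat) \<Rightarrow> bel \<Rightarrow> bel \<Rightarrow> bel" where
  "bmeet n k x y = pmeet blowup_le (blowup_carrier n k) x y"

definition bperp :: "nat \<Rightarrow> (nat set \<Rightarrow> nat) \<Rightarrow> bel \<Rightarrow> bel set" where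
  "bperp n k x = {z \<in> blowup_carrier n k. bmeet n k x z = blowup_zero}"

definition bclass :: "nat \<Rightarrow> (nat set \<Rightarrow> nat) \<Rightarrow> bel \<Rightarrow> bel set" where
  "bclass n k x = {y \<in> blowup_carrier n k. bperp n k y = bperp n k x}"

definition bclass_le :: "nat \<Rightarrow> (nat set \<Rightarrow> nat) \<Rightarrow> bel \<Rightarrow> bel \<Rightarrow> bool" where
  "bclass_le n k a b \<longleftrightarrow> bperp n k b \<subseteq> bperp n k a"

definition zdg_vertices :: "nat \<Rightarrow> (nat set \<Rightarrow> nat) \<Rightarrow> bel set" where
  "zdg_vertices n k = {x \<in> blowup_carrier n k. x \<noteq> blowup_zero \<and>
     (\<exists>z \<in> blowup_carrier n k. z \<noteq> blowup_zero \<and> bmeet n k x z = blowup_zero)}"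

text \<open>Adjacency of G(L^B)^{**}; [x] \<and> [y] = [x \<and> y].\<close>
definition gss_adj :: "nat \<Rightarrow> (nat set \<Rightarrow> nat) \<Rightarrow> bel \<Rightarrow> bel \<Rightarrow> bool" where
  "gss_adj n k x y \<longleftrightarrow> x \<in> zdg_vertices n k \<and> y \<in> zdg_vertices n k \<and> x \<noteq> y \<and>
     (bclass n k x = bclass n k y \<or>
      (bclass n k (bmeet n k x y) \<noteq> bclass n k blowup_zero \<and>
       \<not> bclass_le n k x y \<and> \<not> bclass_le n k y x))"

definition induced_connected :: "('a \<Rightarrow> 'a \<Rightarrow> bool) \<Rightarrow> 'a set \<Rightarrow> bool" where
  "induced_connected E W \<longleftrightarrow> W \<noteq> {} \<and>
     (\<forall>x\<in>W. \<forall>y\<in>W. (\<lambda>u v. u \<in> W \<and> v \<in> W \<and> E u v)\<^sup>*\<^sup>* x y)"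

end

theory Submission
  imports Defs
begin

text \<open>The annihilator x^perp of an element of L^B depends only on its support in 2^n: a meet is
  zero exactly when the supports are disjoint, and the atoms separate supports. So the classes [x]
  are the sets of elements with a common support, [x] \<le> [y] is inclusion of supports, and x, y
  are adjacent in G(L^B)^** iff their supports are equal or overlapping (meeting but
  incomparable). A singleton overlaps nothing, so each [q_i] is a clique with no other neighbours.
  Every other proper support overlaps a two-element set, and for n \<ge> 3 any two two-element sets
  are joined through at most one further one, so the remaining vertices form a connected graph.\<close>

lemma blowup_le_antisym: "blowup_le x y \<Longrightarrow> blowup_le y x \<Longrightarrow> x = y"
  by (cases x; cases y) (auto simp: blowup_le_def)

lemma bmeet_commute: "bmeet n k x y = bmeet n k y x"
  unfolding bmeet_def pmeet_def by (simp only: conj_ac)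

lemma symp_gss_adj: "symp (gss_adj n k)"
  unfolding symp_def gss_adj_def by (metis bmeet_commute)

definition blowup_inf :: "(nat set \<Rightarrow> nat) \<Rightarrow> bel \<Rightarrow> bel \<Rightarrow> bel" where
  "blowup_inf k x y =
    (if fst x = fst y then (fst x, min (snd x) (snd y))
     else if fst x \<subset> fst y then x
     else if fst y \<subset> fst x then y
     else if fst x \<inter> fst y = {} then blowup_zero
     else (fst x \<inter> fst y, k (fst x \<inter> fst y)))"

lemma blowup_inf_same_support: "fst x = fst y \<Longrightarrow> blowup_inf k x y = (fst x, min (snd x) (snd y))"
  by (simp add: blowup_inf_def)

lemma blowup_inf_psubset_left: "fst x \<subset> fst y \<Longrightarrow> blowup_inf k x y = x"
  by (simp add: blowup_inf_def less_imp_neq)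

lemma blowup_inf_psubset_right: "fst y \<subset> fst x \<Longrightarrow> blowup_inf k x y = y"
  by (auto simp: blowup_inf_def)

lemma blowup_inf_incomparable:
  "\<not> fst x \<subseteq> fst y \<Longrightarrow> \<not> fst y \<subseteq> fst x \<Longrightarrow> blowup_inf k x y =
     (if fst x \<inter> fst y = {} then blowup_zero else (fst x \<inter> fst y, k (fst x \<inter> fst y)))"
  by (auto simp: blowup_inf_def)

lemma supports_cases:
  obtains "fst x = fst y" | "fst x \<subset> fst y" | "fst y \<subset> fst x"
    | "\<not> fst x \<subseteq> fst y" "\<not> fst y \<subseteq> fst x"
  by blast

lemma fst_blowup_inf: "fst (blowup_inf k x y) = fst x \<inter> fst y"
  by (cases x y rule: supports_cases)
    (auto simp: blowup_inf_same_support blowup_inf_psubset_left blowup_inf_psubset_right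
      blowup_inf_incomparable blowup_zero_def)

definition overlapping :: "'a set \<Rightarrow> 'a set \<Rightarrow> bool" where
  "overlapping a b \<longleftrightarrow> a \<inter> b \<noteq> {} \<and> \<not> a \<subseteq> b \<and> \<not> b \<subseteq> a"

lemma not_overlapping_singleton: "\<not> overlapping {i} b"
  by (auto simp: overlapping_def)

lemma induced_connected_via_hub:
  assumes "symp E" "h \<in> W"
    and reach: "\<And>x. x \<in> W \<Longrightarrow> (\<lambda>u v. u \<in> W \<and> v \<in> W \<and> E u v)\<^sup>*\<^sup>* x h"
  shows "induced_connected E W"
proof -
  let ?R = "\<lambda>u v. u \<in> W \<and> v \<in> W \<and> E u v"
  have "symp ?R\<^sup>*\<^sup>*" using \<open>symp E\<close> by (intro symp_rtranclp) (auto simp: symp_def)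
  then have "?R\<^sup>*\<^sup>* h y" if "y \<in> W" for y using reach[OF that] by (blast dest: sympD)
  then show ?thesis
    unfolding induced_connected_def using \<open>h \<in> W\<close> reach by (blast intro: rtranclp_trans)
qed

locale blowup =
  fixes n :: nat and k :: "nat set \<Rightarrow> nat"
  assumes chains_nonempty: "\<forall>a. a \<subseteq> {..<n} \<and> a \<noteq> {} \<and> a \<noteq> {..<n} \<longrightarrow> 1 \<le> k a"
begin

abbreviation carrier :: "bel set" where "carrier \<equiv> blowup_carrier n k"

lemma blowup_inf_in_carrier:
  assumes "x \<in> carrier" "y \<in> carrier"
  shows "blowup_inf k x y \<in> carrier"
proof (cases x y rule: supports_cases)
  case 1
  then show ?thesis using assms
    by (cases x; cases y) (simp add: blowup_inf_same_support blowup_carrier_def min_def split: if_splits)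
next
  case 4
  define c where "c = fst x \<inter> fst y"
  have "c \<subseteq> {..<n}" "c \<noteq> {..<n}"
    using 4 assms by (auto simp: c_def blowup_carrier_def)
  then have "c \<noteq> {} \<Longrightarrow> (c, k c) \<in> carrier"
    using chains_nonempty by (simp add: blowup_carrier_def)
  moreover have "blowup_zero \<in> carrier" by (simp add: blowup_zero_def blowup_carrier_def)
  ultimately show ?thesis
    using 4 by (simp add: blowup_inf_incomparable c_def)
qed (use assms in \<open>simp_all add: blowup_inf_psubset_left blowup_inf_psubset_right\<close>)

lemma blowup_inf_lower:
  "blowup_le (blowup_inf k x y) x" "blowup_le (blowup_inf k x y) y"
  by (cases x y rule: supports_cases;
      auto simp: blowup_inf_same_support blowup_inf_psubset_left blowup_inf_psubset_right
        blowup_inf_incomparable blowup_le_def blowup_zero_def)+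

lemma blowup_inf_greatest:
  assumes "x \<in> carrier" "z \<in> carrier"
    and zx: "blowup_le z x" and zy: "blowup_le z y"
  shows "blowup_le z (blowup_inf k x y)"
proof (cases x y rule: supports_cases)
  case 1
  then show ?thesis using zx zy unfolding blowup_le_def by (simp add: blowup_inf_same_support) blast
next
  case 4
  obtain c t where z: "z = (c, t)" by fastforce
  have c: "c \<subseteq> fst x \<inter> fst y" using zx zy 4 z by (auto simp: blowup_le_def)
  have "fst x \<inter> fst y \<noteq> {..<n}" using 4 assms(1) by (auto simp: blowup_carrier_def)
  then have "c = fst x \<inter> fst y \<Longrightarrow> c \<noteq> {} \<Longrightarrow> t \<le> k c"
    using \<open>z \<in> carrier\<close> z by (simp add: blowup_carrier_def)
  moreover have "c = {} \<Longrightarrow> t = 1"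
    using \<open>z \<in> carrier\<close> z by (simp add: blowup_carrier_def)
  ultimately show ?thesis
    using c z 4
    by (cases "fst x \<inter> fst y = {}"; cases "c = fst x \<inter> fst y")
      (simp_all add: blowup_inf_incomparable blowup_le_def blowup_zero_def psubset_eq)
qed (use zx zy in \<open>simp_all add: blowup_inf_psubset_left blowup_inf_psubset_right\<close>)

lemma bmeet_eq_blowup_inf:
  assumes "x \<in> carrier" "y \<in> carrier"
  shows "bmeet n k x y = blowup_inf k x y"
  unfolding bmeet_def pmeet_def
proof (rule the_equality)
  show "blowup_inf k x y \<in> carrier \<and> blowup_le (blowup_inf k x y) x \<and> blowup_le (blowup_inf k x y) y
      \<and> (\<forall>z\<in>carrier. blowup_le z x \<and> blowup_le z y \<longrightarrow> blowup_le z (blowup_inf k x y))"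
    using assms blowup_inf_in_carrier blowup_inf_lower blowup_inf_greatest by blast
next
  fix m assume "m \<in> carrier \<and> blowup_le m x \<and> blowup_le m y
      \<and> (\<forall>z\<in>carrier. blowup_le z x \<and> blowup_le z y \<longrightarrow> blowup_le z m)"
  then show "m = blowup_inf k x y"
    using assms blowup_inf_in_carrier blowup_inf_lower blowup_inf_greatest blowup_le_antisym
    by metis
qed

lemma carrier_eq_zero_iff: "x \<in> carrier \<Longrightarrow> x = blowup_zero \<longleftrightarrow> fst x = {}"
  by (cases x) (auto simp: blowup_carrier_def blowup_zero_def)

lemma bmeet_eq_zero_iff:
  assumes "x \<in> carrier" "y \<in> carrier"
  shows "bmeet n k x y = blowup_zero \<longleftrightarrow> fst x \<inter> fst y = {}"
  using assms carrier_eq_zero_iff blowup_inf_in_carrier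
  by (simp add: bmeet_eq_blowup_inf fst_blowup_inf)

lemma bperp_eq:
  assumes "x \<in> carrier"
  shows "bperp n k x = {z \<in> carrier. fst x \<inter> fst z = {}}"
  using assms by (auto simp: bperp_def bmeet_eq_zero_iff)

end

locale blowup_nontrivial = blowup +
  assumes two_le_n: "2 \<le> n"
begin

lemma singleton_ne_all: "{i} \<noteq> {..<n}"
proof
  assume "{i} = {..<n}"
  then have "card {i} = n" by simp
  with two_le_n show False by simp
qed

lemma atom_in_carrier: "i < n \<Longrightarrow> ({i}, 1) \<in> carrier"
  using chains_nonempty[rule_format, of "{i}"] singleton_ne_all by (simp add: blowup_carrier_def)

lemma bperp_subset_iff:
  assumes x: "x \<in> carrier" and y: "y \<in> carrier"
  shows "bperp n k y \<subseteq> bperp n k x \<longleftrightarrow> fst x \<subseteq> fst y"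
proof
  assume perp: "bperp n k y \<subseteq> bperp n k x"
  show "fst x \<subseteq> fst y"
  proof
    fix i assume i: "i \<in> fst x"
    then have "i < n" using x by (cases x) (auto simp: blowup_carrier_def)
    then have "({i}, 1) \<in> carrier" by (rule atom_in_carrier)
    then show "i \<in> fst y" using i perp bperp_eq[OF x] bperp_eq[OF y] by auto
  qed
qed (use bperp_eq[OF x] bperp_eq[OF y] in auto)

lemma bclass_eq:
  assumes x: "x \<in> carrier"
  shows "bclass n k x = {y \<in> carrier. fst y = fst x}"
proof -
  have "bperp n k y = bperp n k x \<longleftrightarrow> fst y = fst x" if y: "y \<in> carrier" for y
    using bperp_subset_iff[OF x y] bperp_subset_iff[OF y x] by auto
  then show ?thesis by (auto simp: bclass_def)
qed

lemma bclass_eq_iff: "x \<in> carrier \<Longrightarrow> y \<in> carrier \<Longrightarrow> bclass n k x = bclass n k y \<longleftrightarrow> fst x = fst y"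
  using bclass_eq by auto

lemma bclass_atom: "i < n \<Longrightarrow> bclass n k (blowup_atom i) = {y \<in> carrier. fst y = {i}}"
  unfolding blowup_atom_def using bclass_eq[OF atom_in_carrier] by simp

lemma zdg_vertices_eq: "zdg_vertices n k = {x \<in> carrier. fst x \<noteq> {} \<and> fst x \<noteq> {..<n}}"
proof -
  have "(\<exists>z\<in>carrier. z \<noteq> blowup_zero \<and> bmeet n k x z = blowup_zero) \<longleftrightarrow> fst x \<noteq> {..<n}"
    if x: "x \<in> carrier" for x
  proof
    assume "\<exists>z\<in>carrier. z \<noteq> blowup_zero \<and> bmeet n k x z = blowup_zero"
    then obtain z where "z \<in> carrier" "fst z \<noteq> {}" "fst x \<inter> fst z = {}"
      using x bmeet_eq_zero_iff carrier_eq_zero_iff by blast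
    then show "fst x \<noteq> {..<n}" by (cases z) (auto simp: blowup_carrier_def)
  next
    assume "fst x \<noteq> {..<n}"
    then obtain i where "i < n" "i \<notin> fst x" using x by (cases x) (auto simp: blowup_carrier_def)
    then show "\<exists>z\<in>carrier. z \<noteq> blowup_zero \<and> bmeet n k x z = blowup_zero"
      using x atom_in_carrier bmeet_eq_zero_iff by (intro bexI[of _ "({i}, 1)"]) (auto simp: blowup_zero_def)
  qed
  then show ?thesis unfolding zdg_vertices_def using carrier_eq_zero_iff by blast
qed

lemma gss_adj_iff:
  "gss_adj n k x y \<longleftrightarrow> x \<in> zdg_vertices n k \<and> y \<in> zdg_vertices n k \<and> x \<noteq> y \<and>
     (fst x = fst y \<or> overlapping (fst x) (fst y))"
proof (cases "x \<in> zdg_vertices n k \<and> y \<in> zdg_vertices n k")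
  case True
  then have x: "x \<in> carrier" and y: "y \<in> carrier" by (auto simp: zdg_vertices_def)
  have "bmeet n k x y \<in> carrier" "fst (bmeet n k x y) = fst x \<inter> fst y"
    using x y by (simp_all add: bmeet_eq_blowup_inf blowup_inf_in_carrier fst_blowup_inf)
  then have "bclass n k (bmeet n k x y) = bclass n k blowup_zero \<longleftrightarrow> fst x \<inter> fst y = {}"
    by (simp add: bclass_eq_iff blowup_zero_def blowup_carrier_def)
  then show ?thesis
    using True x y
    by (auto simp: gss_adj_def bclass_le_def bclass_eq_iff bperp_subset_iff overlapping_def)
qed (auto simp: gss_adj_def)

lemma atom_class_subset_vertices: "i < n \<Longrightarrow> bclass n k (blowup_atom i) \<subseteq> zdg_vertices n k"
  using singleton_ne_all by (auto simp: bclass_atom zdg_vertices_eq)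

lemma atom_classes_disjoint:
  "i < n \<Longrightarrow> j < n \<Longrightarrow> i \<noteq> j \<Longrightarrow> bclass n k (blowup_atom i) \<inter> bclass n k (blowup_atom j) = {}"
  by (auto simp: bclass_atom)

lemma gss_adj_atom_class_iff:
  assumes "i < n" "x \<in> bclass n k (blowup_atom i)"
  shows "gss_adj n k x y \<longleftrightarrow> y \<in> bclass n k (blowup_atom i) \<and> x \<noteq> y"
proof -
  have "fst x = {i}" "x \<in> zdg_vertices n k"
    using assms atom_class_subset_vertices by (auto simp: bclass_atom)
  then have "gss_adj n k x y \<longleftrightarrow> y \<in> zdg_vertices n k \<and> fst y = {i} \<and> x \<noteq> y"
    by (auto simp: gss_adj_iff not_overlapping_singleton)
  also have "\<dots> \<longleftrightarrow> y \<in> bclass n k (blowup_atom i) \<and> x \<noteq> y"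
    using atom_class_subset_vertices[OF \<open>i < n\<close>]
    unfolding bclass_atom[OF \<open>i < n\<close>] zdg_vertices_def by blast
  finally show ?thesis .
qed

definition nonatomic_vertices :: "bel set" where
  "nonatomic_vertices = zdg_vertices n k - (\<Union>i<n. bclass n k (blowup_atom i))"

lemma mem_nonatomic_vertices_iff:
  "x \<in> nonatomic_vertices \<longleftrightarrow>
     x \<in> carrier \<and> fst x \<noteq> {} \<and> fst x \<noteq> {..<n} \<and> (\<forall>i. fst x \<noteq> {i})"
  by (cases x) (auto simp: nonatomic_vertices_def zdg_vertices_eq bclass_atom blowup_carrier_def)

lemma gss_adj_if_overlapping:
  "x \<in> nonatomic_vertices \<Longrightarrow> y \<in> nonatomic_vertices \<Longrightarrow> overlapping (fst x) (fst y) \<Longrightarrow>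
     gss_adj n k x y"
  by (auto simp: gss_adj_iff nonatomic_vertices_def overlapping_def)

definition nonatomic_adj :: "bel \<Rightarrow> bel \<Rightarrow> bool" where
  "nonatomic_adj u v \<longleftrightarrow> u \<in> nonatomic_vertices \<and> v \<in> nonatomic_vertices \<and> gss_adj n k u v"

lemma doubleton_mem_nonatomic_vertices:
  assumes "3 \<le> n" "p \<noteq> c" "p < n" "c < n"
  shows "({p, c}, 1) \<in> nonatomic_vertices"
proof -
  have "{p, c} \<noteq> {..<n}"
  proof
    assume "{p, c} = {..<n}"
    then have "card {p, c} = n" by simp
    with assms show False by simp
  qed
  then show ?thesis
    using assms chains_nonempty[rule_format, of "{p, c}"]
    by (auto simp: mem_nonatomic_vertices_iff blowup_carrier_def doubleton_eq_iff)
qed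

lemma doubleton_adj_doubleton:
  assumes "3 \<le> n" "p \<noteq> c" "p < n" "c < n" "q \<noteq> d" "q < n" "d < n"
    and "{p, c} \<noteq> {q, d}" "{p, c} \<inter> {q, d} \<noteq> {}"
  shows "nonatomic_adj ({p, c}, 1) ({q, d}, 1)"
proof -
  have "overlapping {p, c} {q, d}" using assms by (auto simp: overlapping_def)
  then show ?thesis
    using assms doubleton_mem_nonatomic_vertices gss_adj_if_overlapping by (simp add: nonatomic_adj_def)
qed

lemma doubleton_reaches_hub:
  assumes "3 \<le> n" "p \<noteq> c" "p < n" "c < n"
  shows "nonatomic_adj\<^sup>*\<^sup>* ({p, c}, 1) ({0, 1}, 1)"
proof -
  have hub: "0 < n" "1 < n" using \<open>3 \<le> n\<close> by auto
  show ?thesis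
  proof (cases "{p, c} \<inter> {0, 1} = {}")
    case True
    then have "p \<noteq> 0" "c \<noteq> 0" "p \<noteq> 1" "c \<noteq> 1" by auto
    then have "{p, c} \<noteq> {c, 0}" "{c, 0} \<noteq> {0, 1}" by (simp_all add: doubleton_eq_iff)
    have "nonatomic_adj ({p, c}, 1) ({c, 0}, 1)"
      by (rule doubleton_adj_doubleton) (use assms hub \<open>c \<noteq> 0\<close> \<open>{p, c} \<noteq> {c, 0}\<close> in simp_all)
    moreover have "nonatomic_adj ({c, 0}, 1) ({0, 1}, 1)"
      by (rule doubleton_adj_doubleton) (use assms hub \<open>c \<noteq> 0\<close> \<open>{c, 0} \<noteq> {0, 1}\<close> in simp_all)
    ultimately show ?thesis by (meson converse_rtranclp_into_rtranclp r_into_rtranclp)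
  next
    case False
    show ?thesis
    proof (cases "{p, c} = {0, 1}")
      case False
      have "nonatomic_adj ({p, c}, 1) ({0, 1}, 1)"
        by (rule doubleton_adj_doubleton)
          (use assms hub False \<open>{p, c} \<inter> {0, 1} \<noteq> {}\<close> in simp_all)
      then show ?thesis by (rule r_into_rtranclp)
    qed simp
  qed
qed

lemma nonatomic_vertex_reaches_hub:
  assumes "3 \<le> n" and x: "x \<in> nonatomic_vertices"
  shows "nonatomic_adj\<^sup>*\<^sup>* x ({0, 1}, 1)"
proof -
  have sub: "fst x \<subseteq> {..<n}"
    using x by (cases x) (auto simp: mem_nonatomic_vertices_iff blowup_carrier_def)
  obtain p where p: "p \<in> fst x" using x by (auto simp: mem_nonatomic_vertices_iff)
  obtain c where c: "c < n" "c \<notin> fst x" using x sub by (auto simp: mem_nonatomic_vertices_iff)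
  have "p < n" "p \<noteq> c" using p c sub by auto
  have "fst x \<noteq> {p}" using x by (simp add: mem_nonatomic_vertices_iff)
  then have "overlapping (fst x) {p, c}" using p c by (auto simp: overlapping_def)
  then have "nonatomic_adj x ({p, c}, 1)"
    using x doubleton_mem_nonatomic_vertices[OF \<open>3 \<le> n\<close> \<open>p \<noteq> c\<close> \<open>p < n\<close> c(1)]
      gss_adj_if_overlapping by (simp add: nonatomic_adj_def)
  then show ?thesis
    using doubleton_reaches_hub[OF \<open>3 \<le> n\<close> \<open>p \<noteq> c\<close> \<open>p < n\<close> c(1)]
    by (rule converse_rtranclp_into_rtranclp)
qed

lemma induced_connected_nonatomic_vertices:
  assumes "3 \<le> n"
  shows "induced_connected (gss_adj n k) nonatomic_vertices"
proof (rule induced_connected_via_hub)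
  show "({0, 1}, 1) \<in> nonatomic_vertices"
    using assms by (intro doubleton_mem_nonatomic_vertices) simp_all
  have "(\<lambda>u v. u \<in> nonatomic_vertices \<and> v \<in> nonatomic_vertices \<and> gss_adj n k u v) = nonatomic_adj"
    by (simp add: fun_eq_iff nonatomic_adj_def)
  then show "(\<lambda>u v. u \<in> nonatomic_vertices \<and> v \<in> nonatomic_vertices \<and> gss_adj n k u v)\<^sup>*\<^sup>* x ({0, 1}, 1)"
    if "x \<in> nonatomic_vertices" for x
    using nonatomic_vertex_reaches_hub[OF assms that] by simp
qed (rule symp_gss_adj)

end

theorem mainTheorem7:
  fixes n :: nat and k :: "nat set \<Rightarrow> nat"
  assumes "n \<ge> 3"
    and "\<forall>a. a \<subseteq> {..<n} \<and> a \<noteq> {} \<and> a \<noteq> {..<n} \<longrightarrow> 1 \<le> k a"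
  defines "V \<equiv> zdg_vertices n k"
    and "Q \<equiv> (\<lambda>i. bclass n k (blowup_atom i))"
    and "H \<equiv> zdg_vertices n k - (\<Union>i<n. bclass n k (blowup_atom i))"
  shows "(\<forall>i<n. Q i \<subseteq> V)
    \<and> (\<forall>i<n. \<forall>j<n. i \<noteq> j \<longrightarrow> Q i \<inter> Q j = {})
    \<and> (\<forall>i<n. \<forall>x\<in>Q i. \<forall>y\<in>Q i. x \<noteq> y \<longrightarrow> gss_adj n k x y)
    \<and> (\<forall>i<n. \<forall>x\<in>Q i. \<forall>y\<in>V - Q i. \<not> gss_adj n k x y \<and> \<not> gss_adj n k y x)
    \<and> induced_connected (gss_adj n k) H"
proof -
  interpret blowup_nontrivial n k
    using assms(1,2) by unfold_locales auto
  have no_edge_leaves: "\<not> gss_adj n k x y \<and> \<not> gss_adj n k y x"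
    if "i < n" "x \<in> Q i" "y \<notin> Q i" for i x y
    using that gss_adj_atom_class_iff sympD[OF symp_gss_adj] unfolding Q_def by blast
  have "H = nonatomic_vertices" by (simp add: H_def nonatomic_vertices_def)
  then show ?thesis
    using atom_class_subset_vertices atom_classes_disjoint gss_adj_atom_class_iff no_edge_leaves
      induced_connected_nonatomic_vertices[OF assms(1)]
    by (simp add: V_def Q_def)
qed

end
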